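(* Let $T$ be a tree. Then $\mathcal{Z}^{\mathrm{TE}}_-(T)$ is connected.
   Context: Skew forcing: vertices are colored blue or white; if any vertex $u$ (blue or white) has exactly one white neighbor $v$, then $u$ may force $v$ to become blue. A skew forcing set is a (possibly empty) set of initially blue vertices from which repeated application of this rule turns every vertex blue; $\mathrm{Z}_-(G)$ is the minimum size of a skew forcing set. $\mathcal{Z}^{\mathrm{TE}}_-(G)$ has as vertices the minimum skew forcing sets of $G$, with $S_1S_2$ an edge iff $S_1\setminus S_2=\{v_1\}$ and $S_2\setminus S_1=\{v_2\}$ for some vertices $v_1,v_2$. *)

theory Defs
  imports Main
begin

definition simple_graph :: "'a set \<Rightarrow> ('a \<Rightarrow> 'a \<Rightarrow> bool) \<Rightarrow> bool" where
  "simple_graph V E \<longleftrightarrow> finite V \<and>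
     (\<forall>u v. E u v \<longrightarrow> u \<in> V \<and> v \<in> V) \<and>
     (\<forall>u v. E u v \<longrightarrow> E v u) \<and> (\<forall>v. \<not> E v v)"

definition graph_connected :: "'a set \<Rightarrow> ('a \<Rightarrow> 'a \<Rightarrow> bool) \<Rightarrow> bool" where
  "graph_connected V E \<longleftrightarrow> V \<noteq> {} \<and>
     (\<forall>x\<in>V. \<forall>y\<in>V. (\<lambda>a b. a \<in> V \<and> b \<in> V \<and> E a b)\<^sup>*\<^sup>* x y)"

definition is_cycle :: "'a set \<Rightarrow> ('a \<Rightarrow> 'a \<Rightarrow> bool) \<Rightarrow> 'a list \<Rightarrow> bool" where
  "is_cycle V E cs \<longleftrightarrow> length cs \<ge> 3 \<and> distinct cs \<and> set cs \<subseteq> V \<and>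
     (\<forall>i. Suc i < length cs \<longrightarrow> E (cs ! i) (cs ! Suc i)) \<and> E (last cs) (hd cs)"

definition is_tree :: "'a set \<Rightarrow> ('a \<Rightarrow> 'a \<Rightarrow> bool) \<Rightarrow> bool" where
  "is_tree V E \<longleftrightarrow> simple_graph V E \<and> graph_connected V E \<and> (\<nexists>cs. is_cycle V E cs)"

text \<open>Skew forcing rule: u (blue or white) has exactly one white neighbor v; then u forces v.\<close>
definition skew_force :: "'a set \<Rightarrow> ('a \<Rightarrow> 'a \<Rightarrow> bool) \<Rightarrow> 'a set \<Rightarrow> 'a \<Rightarrow> 'a \<Rightarrow> bool" where
  "skew_force V E B u v \<longleftrightarrow> u \<in> V \<and> v \<in> V \<and> v \<notin> B \<and> E u v \<and>
     (\<forall>w. w \<in> V \<and> w \<notin> B \<and> E u w \<longrightarrow> w = v)"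

definition skew_step :: "'a set \<Rightarrow> ('a \<Rightarrow> 'a \<Rightarrow> bool) \<Rightarrow> 'a set \<Rightarrow> 'a set \<Rightarrow> bool" where
  "skew_step V E B B' \<longleftrightarrow> (\<exists>u v. skew_force V E B u v \<and> B' = insert v B)"

definition skew_forcing_set :: "'a set \<Rightarrow> ('a \<Rightarrow> 'a \<Rightarrow> bool) \<Rightarrow> 'a set \<Rightarrow> bool" where
  "skew_forcing_set V E S \<longleftrightarrow> S \<subseteq> V \<and> (skew_step V E)\<^sup>*\<^sup>* S V"

definition skew_zero_forcing_number :: "'a set \<Rightarrow> ('a \<Rightarrow> 'a \<Rightarrow> bool) \<Rightarrow> nat" where
  "skew_zero_forcing_number V E = (LEAST k. \<exists>S. skew_forcing_set V E S \<and> card S = k)"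

definition min_skew_forcing_set :: "'a set \<Rightarrow> ('a \<Rightarrow> 'a \<Rightarrow> bool) \<Rightarrow> 'a set \<Rightarrow> bool" where
  "min_skew_forcing_set V E S \<longleftrightarrow> skew_forcing_set V E S \<and> card S = skew_zero_forcing_number V E"

definition skew_TE_vertices :: "'a set \<Rightarrow> ('a \<Rightarrow> 'a \<Rightarrow> bool) \<Rightarrow> 'a set set" where
  "skew_TE_vertices V E = {S. min_skew_forcing_set V E S}"

definition skew_TE_adj :: "'a set \<Rightarrow> 'a set \<Rightarrow> bool" where
  "skew_TE_adj S1 S2 \<longleftrightarrow> (\<exists>v1 v2. S1 - S2 = {v1} \<and> S2 - S1 = {v2})"

end

theory Submission
  imports Defs
begin

(* In an acyclic graph the minimum skew forcing sets are exactly the complements of the vertex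
   sets covered by maximum matchings. The forces of any skew forcing process pair each forced
   vertex with its forcing vertex, and these pairs can be rearranged into a matching covering the
   forced vertices; conversely, a matched vertex l that is a leaf of the matched part forces its
   partner p, the remaining matching forces everything except l, and p finally forces l.
   Two maximum matchings are linked by repeatedly trading an edge x x1 of the first for the edge
   x1 y of the second; each trade moves one token of the complement from x to y. *)

lemma simple_graphD:
  assumes "simple_graph V E"
  shows "finite V" and "E u v \<Longrightarrow> u \<in> V" and "E u v \<Longrightarrow> v \<in> V"
    and "E u v \<Longrightarrow> E v u" and "\<not> E v v"
  using assms unfolding simple_graph_def by blast+

section \<open>Matchings\<close>

(* A matching is represented by its partner relation: m a b iff a and b are matched to each other.
   Maximality is measured by the number of matched vertices, twice the number of edges. *)
definition matching :: "('a \<Rightarrow> 'a \<Rightarrow> bool) \<Rightarrow> ('a \<Rightarrow> 'a \<Rightarrow> bool) \<Rightarrow> bool" where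
  "matching E m \<longleftrightarrow> (\<forall>a b. m a b \<longrightarrow> E a b) \<and> symp m \<and> right_unique m"

definition matched :: "('a \<Rightarrow> 'a \<Rightarrow> bool) \<Rightarrow> 'a set" where
  "matched m = {a. \<exists>b. m a b}"

definition maximum_matching :: "('a \<Rightarrow> 'a \<Rightarrow> bool) \<Rightarrow> ('a \<Rightarrow> 'a \<Rightarrow> bool) \<Rightarrow> bool" where
  "maximum_matching E m \<longleftrightarrow> matching E m \<and>
     (\<forall>m'. matching E m' \<longrightarrow> card (matched m') \<le> card (matched m))"

definition rematch :: "('a \<Rightarrow> 'a \<Rightarrow> bool) \<Rightarrow> 'a \<Rightarrow> 'a \<Rightarrow> 'a \<Rightarrow> 'a \<Rightarrow> bool" where
  "rematch m u v =
     (\<lambda>a b. (m a b \<and> a \<notin> {u, v} \<and> b \<notin> {u, v}) \<or> (a = u \<and> b = v) \<or> (a = v \<and> b = u))"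

lemma matchingD:
  assumes "matching E m"
  shows "m a b \<Longrightarrow> E a b" and "m a b \<Longrightarrow> m b a" and "m a b \<Longrightarrow> m a c \<Longrightarrow> b = c"
  using assms unfolding matching_def symp_def right_unique_def by blast+

lemma matching_empty: "matching E (\<lambda>_ _. False)"
  by (simp add: matching_def symp_def right_unique_def)

lemma matched_subset:
  assumes "simple_graph V E" "matching E m"
  shows "matched m \<subseteq> V"
  using simple_graphD(2)[OF assms(1)] matchingD(1)[OF assms(2)] unfolding matched_def by blast

lemma finite_matched:
  assumes "simple_graph V E" "matching E m"
  shows "finite (matched m)"
  using matched_subset[OF assms] simple_graphD(1)[OF assms(1)] by (rule finite_subset)

lemma card_complement_matched:
  assumes "simple_graph V E" "matching E m"
  shows "card (V - matched m) = card V - card (matched m)"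
  using card_Diff_subset[OF finite_matched[OF assms] matched_subset[OF assms]] .

lemma matching_rematch:
  assumes "matching E m" "E u v" "E v u"
  shows "matching E (rematch m u v)"
  using assms unfolding matching_def rematch_def symp_def right_unique_def by blast

lemma matched_rematch:
  assumes "matching E m" "u \<noteq> v"
  shows "matched (rematch m u v) = {u, v} \<union> (matched m - {a. m a u \<or> m a v})"
  using matchingD[OF assms(1)] assms(2) unfolding matched_def rematch_def by auto metis+

lemma maximum_matching_exists:
  assumes "simple_graph V E"
  obtains m where "maximum_matching E m"
proof -
  have "\<forall>m. matching E m \<longrightarrow> card (matched m) < Suc (card V)"
    using matched_subset[OF assms] simple_graphD(1)[OF assms] by (meson card_mono less_Suc_eq_le)
  then show ?thesis
    using ex_has_greatest_nat[of "matching E" _ "\<lambda>m. card (matched m)"] matching_empty that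
    unfolding maximum_matching_def by blast
qed

lemma maximum_matchingI:
  assumes "matching E m" "maximum_matching E m0" "card (matched m0) \<le> card (matched m)"
  shows "maximum_matching E m"
  using assms unfolding maximum_matching_def by (meson le_trans)

section \<open>Skew forcing sets and matchings\<close>

lemma forced_vertices_matched:
  assumes sg: "simple_graph V E" and forces: "(skew_step V E)\<^sup>*\<^sup>* B V"
  obtains m where "matching E m" and "V - B \<subseteq> matched m"
  using forces
proof (induction arbitrary: thesis rule: converse_rtranclp_induct)
  case base
  then show ?case
    using matching_empty by blast
next
  case (step B B')
  obtain m where m: "matching E m" and covers: "V - B' \<subseteq> matched m"
    using step.IH by blast
  obtain u v where force: "skew_force V E B u v" and B': "B' = insert v B"
    using step.hyps(1) unfolding skew_step_def by blast
  have uv: "E u v" "E v u" "u \<noteq> v"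
    using force simple_graphD(4,5)[OF sg] unfolding skew_force_def by blast+
  show ?case
  proof (cases "v \<in> matched m")
    case True
    then show ?thesis
      using step.prems m covers B' by blast
  next
    case False
    have "a \<in> matched (rematch m u v)" if a: "a \<in> V - B" for a
    proof -
      consider "a \<in> {u, v}" | "a \<in> matched m - {u, v}"
        using a covers B' by blast
      then show ?thesis
      proof cases
        case 2
        \<comment> \<open>\<open>v\<close> is the only white neighbour of the forcing vertex \<open>u\<close>\<close>
        have "\<not> m a u"
          using a 2 force matchingD(1,2)[OF m] unfolding skew_force_def by blast
        moreover have "\<not> m a v"
          using False matchingD(2)[OF m] unfolding matched_def by blast
        ultimately show ?thesis
          using 2 matched_rematch[OF m uv(3)] by blast
      qed (use matched_rematch[OF m uv(3)] in blast)
    qed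
    then show ?thesis
      using step.prems matching_rematch[OF m uv(1,2)] by blast
  qed
qed

lemma card_skew_forcing_set_ge:
  assumes sg: "simple_graph V E" and "skew_forcing_set V E S" and max: "maximum_matching E m"
  shows "card V - card (matched m) \<le> card S"
proof -
  have "S \<subseteq> V" and forces: "(skew_step V E)\<^sup>*\<^sup>* S V"
    using \<open>skew_forcing_set V E S\<close> unfolding skew_forcing_set_def by blast+
  obtain m' where m': "matching E m'" and covers: "V - S \<subseteq> matched m'"
    using forced_vertices_matched[OF sg forces] by blast
  have "card V - card S = card (V - S)"
    using \<open>S \<subseteq> V\<close> simple_graphD(1)[OF sg] by (simp add: card_Diff_subset finite_subset)
  also have "\<dots> \<le> card (matched m')"
    using covers finite_matched[OF sg m'] by (rule card_mono[rotated])
  also have "\<dots> \<le> card (matched m)"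
    using max m' unfolding maximum_matching_def by blast
  finally show ?thesis
    by linarith
qed

section \<open>Acyclic graphs\<close>

lemma is_cycle_take:
  assumes "distinct xs" "set xs \<subseteq> V" "successively E xs"
    and "2 \<le> j" "j < length xs" "E (xs ! j) (hd xs)"
  shows "is_cycle V E (take (Suc j) xs)"
proof -
  have "successively E (take (Suc j) xs)"
    using \<open>successively E xs\<close> successively_append_iff[of E "take (Suc j) xs" "drop (Suc j) xs"]
    by simp
  moreover have "last (take (Suc j) xs) = xs ! j"
    using assms(5) by (simp add: take_Suc_conv_app_nth)
  moreover have "hd (take (Suc j) xs) = hd xs"
    by (simp add: hd_take)
  ultimately show ?thesis
    using assms set_take_subset[of "Suc j" xs]
    unfolding is_cycle_def successively_conv_nth by auto
qed

lemma acyclic_has_leaf: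
  assumes sg: "simple_graph V E" and acyclic: "\<nexists>cs. is_cycle V E cs"
    and W: "W \<subseteq> V" "W \<noteq> {}" and no_isolated: "\<forall>w\<in>W. \<exists>y\<in>W. E w y"
  shows "\<exists>l\<in>W. \<exists>p\<in>W. E l p \<and> (\<forall>y\<in>W. E l y \<longrightarrow> y = p)"
proof (rule ccontr)
  assume no_leaf: "\<not> ?thesis"
  define path where "path xs \<longleftrightarrow> xs \<noteq> [] \<and> distinct xs \<and> set xs \<subseteq> W \<and> successively E xs"
    for xs
  have "finite W"
    using W sg simple_graphD(1) finite_subset by blast
  then have "\<forall>xs. path xs \<longrightarrow> length xs < Suc (card W)"
    unfolding path_def by (metis card_mono distinct_card less_Suc_eq_le)
  moreover obtain w where "w \<in> W"
    using W by blast
  then have "path [w]"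
    unfolding path_def by simp
  ultimately obtain xs where "path xs" and longest: "\<And>ys. path ys \<Longrightarrow> length ys \<le> length xs"
    using ex_has_greatest_nat[of path "[w]" length] by blast
  then obtain x rest where xs: "xs = x # rest" and "x \<in> W"
    unfolding path_def by (cases xs) auto
  have on_path: "y \<in> set xs" if "y \<in> W" "E x y" for y
  proof (rule ccontr)
    assume "y \<notin> set xs"
    then have "path (y # xs)"
      using \<open>path xs\<close> that simple_graphD(4)[OF sg] unfolding path_def xs by simp
    then show False
      using longest by fastforce
  qed
  obtain y1 y2 where "y1 \<in> W" "y2 \<in> W" "E x y1" "E x y2" "y1 \<noteq> y2"
    using no_isolated no_leaf \<open>x \<in> W\<close> by blast
  then obtain y where y: "y \<in> W" "E x y" "rest = [] \<or> y \<noteq> hd rest"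
    by metis
  then obtain j where j: "j < length xs" "xs ! j = y"
    using on_path by (meson in_set_conv_nth)
  have "j \<noteq> 0"
    using j y(2) simple_graphD(5)[OF sg] xs by (metis nth_Cons_0)
  moreover have "j \<noteq> 1"
    using j y(3) xs by (auto simp: hd_conv_nth)
  ultimately have "is_cycle V E (take (Suc j) xs)"
    using \<open>path xs\<close> W j y(2) simple_graphD(4)[OF sg]
    by (intro is_cycle_take) (auto simp: path_def xs)
  then show False
    using acyclic by blast
qed

definition skew_step_by :: "'a set \<Rightarrow> ('a \<Rightarrow> 'a \<Rightarrow> bool) \<Rightarrow> 'a set \<Rightarrow> 'a set \<Rightarrow> 'a set \<Rightarrow> bool" where
  "skew_step_by V E W B B' \<longleftrightarrow> (\<exists>u\<in>W. \<exists>v. skew_force V E B u v \<and> B' = insert v B)"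

lemma skew_step_by_mono: "W \<subseteq> W' \<Longrightarrow> skew_step_by V E W \<le> skew_step_by V E W'"
  unfolding skew_step_by_def by blast

lemma skew_step_by_le_skew_step: "skew_step_by V E W \<le> skew_step V E"
  unfolding skew_step_by_def skew_step_def by blast

lemma rtranclp_skew_step_by_subset: "(skew_step_by V E W)\<^sup>*\<^sup>* B B' \<Longrightarrow> B \<subseteq> B'"
  by (induction rule: rtranclp_induct) (auto simp: skew_step_by_def)

lemma rtranclp_skew_step_by_remove:
  assumes steps: "(skew_step_by V E W)\<^sup>*\<^sup>* B B'" and "l \<in> B"
    and not_adj: "\<And>u. u \<in> W \<Longrightarrow> \<not> E u l"
  shows "(skew_step_by V E W)\<^sup>*\<^sup>* (B - {l}) (B' - {l})"
  using steps
proof (induction rule: rtranclp_induct)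
  case (step C C')
  obtain u v where u: "u \<in> W" and force: "skew_force V E C u v" and C': "C' = insert v C"
    using step.hyps(2) unfolding skew_step_by_def by blast
  have "l \<in> C"
    using rtranclp_skew_step_by_subset[OF step.hyps(1)] \<open>l \<in> B\<close> by blast
  then have "skew_force V E (C - {l}) u v" and "C' - {l} = insert v (C - {l})"
    using force not_adj[OF u] C' unfolding skew_force_def by blast+
  then have "skew_step_by V E W (C - {l}) (C' - {l})"
    using u unfolding skew_step_by_def by blast
  then show ?case
    using step.IH by simp
qed simp

lemma rtranclp_skew_step_by_leaf_pair:
  assumes sg: "simple_graph V E" and "M \<subseteq> V" and lp: "l \<in> M" "p \<in> M" "E l p"
    and leaf: "\<And>y. y \<in> M \<Longrightarrow> E l y \<Longrightarrow> y = p"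
    and forces: "(skew_step_by V E (M - {l, p}))\<^sup>*\<^sup>* (V - (M - {l, p})) V"
  shows "(skew_step_by V E M)\<^sup>*\<^sup>* (V - M) V"
proof -
  have "l \<noteq> p"
    using lp(3) simple_graphD(5)[OF sg] by blast
  have "\<not> E u l" if "u \<in> M - {l, p}" for u
    using that leaf simple_graphD(4)[OF sg] by blast
  moreover have "l \<in> V - (M - {l, p})"
    using \<open>M \<subseteq> V\<close> lp(1) by blast
  ultimately have "(skew_step_by V E (M - {l, p}))\<^sup>*\<^sup>* (V - (M - {l, p}) - {l}) (V - {l})"
    using rtranclp_skew_step_by_remove[OF forces] by blast
  moreover have "V - (M - {l, p}) - {l} = insert p (V - M)"
    using \<open>M \<subseteq> V\<close> \<open>l \<noteq> p\<close> lp(1,2) by blast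
  ultimately have "(skew_step_by V E (M - {l, p}))\<^sup>*\<^sup>* (insert p (V - M)) (V - {l})"
    by simp
  then have middle: "(skew_step_by V E M)\<^sup>*\<^sup>* (insert p (V - M)) (V - {l})"
    using rtranclp_mono[OF skew_step_by_mono[of "M - {l, p}" M V E]] by (simp add: le_fun_def)
  have first: "skew_step_by V E M (V - M) (insert p (V - M))"
    unfolding skew_step_by_def skew_force_def using lp \<open>M \<subseteq> V\<close> leaf by blast
  have last: "skew_step_by V E M (V - {l}) V"
    unfolding skew_step_by_def skew_force_def
    using lp \<open>M \<subseteq> V\<close> simple_graphD(4)[OF sg] by (intro bexI[of _ p] exI[of _ l]) auto
  show ?thesis
    using first middle last by (meson converse_rtranclp_into_rtranclp rtranclp.rtrancl_into_rtrancl)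
qed

lemma rtranclp_skew_step_by_matched:
  assumes sg: "simple_graph V E" and acyclic: "\<nexists>cs. is_cycle V E cs" and "matching E m"
  shows "(skew_step_by V E (matched m))\<^sup>*\<^sup>* (V - matched m) V"
  using \<open>matching E m\<close>
proof (induction "card (matched m)" arbitrary: m rule: less_induct)
  case less
  note m = less.prems
  let ?M = "matched m"
  have M: "?M \<subseteq> V" "finite ?M"
    using matched_subset[OF sg m] finite_matched[OF sg m] .
  show ?case
  proof (cases "?M = {}")
    case False
    have "\<forall>w\<in>?M. \<exists>y\<in>?M. E w y"
      using matchingD(1,2)[OF m] unfolding matched_def by blast
    then obtain l p where lp: "l \<in> ?M" "p \<in> ?M" "E l p"
      and leaf: "\<And>y. y \<in> ?M \<Longrightarrow> E l y \<Longrightarrow> y = p"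
      using acyclic_has_leaf[OF sg acyclic M(1) False] by blast
    have "m l p"
      using lp(1) leaf matchingD(1,2)[OF m] unfolding matched_def by blast
    define m' where "m' = (\<lambda>a b. m a b \<and> a \<notin> {l, p} \<and> b \<notin> {l, p})"
    have m': "matching E m'"
      using m unfolding m'_def matching_def symp_def right_unique_def by blast
    have M': "matched m' = ?M - {l, p}"
      using \<open>m l p\<close> matchingD(2,3)[OF m] unfolding m'_def matched_def by blast
    have "card (matched m') < card ?M"
      using M' M(2) lp(1,2) by (metis Diff_insert2 card_Diff2_less)
    then have "(skew_step_by V E (?M - {l, p}))\<^sup>*\<^sup>* (V - (?M - {l, p})) V"
      using less.hyps[OF _ m'] M' by simp
    then show ?thesis
      using rtranclp_skew_step_by_leaf_pair[OF sg M(1) lp leaf] by blast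
  qed simp
qed

lemma skew_forcing_set_complement_matched:
  assumes "simple_graph V E" "\<nexists>cs. is_cycle V E cs" "matching E m"
  shows "skew_forcing_set V E (V - matched m)"
  using rtranclp_mono[OF skew_step_by_le_skew_step] rtranclp_skew_step_by_matched[OF assms]
  unfolding skew_forcing_set_def by blast

lemma skew_zero_forcing_number_acyclic:
  assumes sg: "simple_graph V E" and acyclic: "\<nexists>cs. is_cycle V E cs" and max: "maximum_matching E m"
  shows "skew_zero_forcing_number V E = card V - card (matched m)"
  unfolding skew_zero_forcing_number_def
proof (rule Least_equality)
  have "matching E m"
    using max unfolding maximum_matching_def by blast
  then show "\<exists>S. skew_forcing_set V E S \<and> card S = card V - card (matched m)"
    using skew_forcing_set_complement_matched[OF sg acyclic] card_complement_matched[OF sg] by blast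
qed (use card_skew_forcing_set_ge[OF sg _ max] in blast)

lemma min_skew_forcing_set_iff:
  assumes sg: "simple_graph V E" and acyclic: "\<nexists>cs. is_cycle V E cs"
  shows "min_skew_forcing_set V E S \<longleftrightarrow> (\<exists>m. maximum_matching E m \<and> S = V - matched m)"
proof
  obtain m0 where max0: "maximum_matching E m0"
    using maximum_matching_exists[OF sg] .
  assume "min_skew_forcing_set V E S"
  then have "S \<subseteq> V" and forces: "(skew_step V E)\<^sup>*\<^sup>* S V"
    and card_S: "card S = card V - card (matched m0)"
    unfolding min_skew_forcing_set_def skew_forcing_set_def
    using skew_zero_forcing_number_acyclic[OF sg acyclic max0] by auto
  obtain m where m: "matching E m" and covers: "V - S \<subseteq> matched m"
    using forced_vertices_matched[OF sg forces] by blast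
  have "card (matched m) \<le> card (matched m0)"
    using max0 m unfolding maximum_matching_def by blast
  moreover have "card (V - S) = card (matched m0)"
  proof -
    have "matching E m0"
      using max0 unfolding maximum_matching_def by blast
    then have "card (matched m0) \<le> card V"
      using card_mono[OF simple_graphD(1)[OF sg] matched_subset[OF sg]] by blast
    moreover have "card (V - S) = card V - card S"
      using \<open>S \<subseteq> V\<close> simple_graphD(1)[OF sg] by (simp add: card_Diff_subset finite_subset)
    ultimately show ?thesis
      using card_S by simp
  qed
  ultimately have "V - S = matched m"
    using covers finite_matched[OF sg m] by (metis card_seteq)
  then show "\<exists>m. maximum_matching E m \<and> S = V - matched m"
    using \<open>S \<subseteq> V\<close> maximum_matchingI[OF m max0] \<open>card (V - S) = card (matched m0)\<close> by auto
next
  assume "\<exists>m. maximum_matching E m \<and> S = V - matched m"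
  then obtain m where max: "maximum_matching E m" and S: "S = V - matched m"
    by blast
  then show "min_skew_forcing_set V E S"
    unfolding min_skew_forcing_set_def
    using skew_forcing_set_complement_matched[OF sg acyclic] card_complement_matched[OF sg]
      skew_zero_forcing_number_acyclic[OF sg acyclic max]
    by (auto simp: maximum_matching_def)
qed

section \<open>Exchanging maximum matchings\<close>

lemma maximum_matching_exchange:
  assumes sg: "simple_graph V E" and max1: "maximum_matching E m1" and max2: "maximum_matching E m2"
    and x: "x \<in> matched m1" "x \<notin> matched m2"
  obtains m3 y where "maximum_matching E m3" and "y \<in> matched m2" and "y \<noteq> x"
    and "matched m3 = insert x (matched m2 - {y})"
    and "{(a, b). m1 a b \<noteq> m3 a b} \<subset> {(a, b). m1 a b \<noteq> m2 a b}"
proof -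
  have m1: "matching E m1" and m2: "matching E m2"
    using max1 max2 unfolding maximum_matching_def by blast+
  obtain x1 where "m1 x x1"
    using x(1) unfolding matched_def by blast
  then have xx1: "E x x1" "E x1 x" "x \<noteq> x1"
    using matchingD(1)[OF m1] simple_graphD(4,5)[OF sg] by blast+
  define m3 where "m3 = rematch m2 x x1"
  have m3: "matching E m3"
    unfolding m3_def using matching_rematch[OF m2 xx1(1,2)] .
  have "x1 \<in> matched m2"
  proof (rule ccontr)
    assume "x1 \<notin> matched m2"
    \<comment> \<open>then the edge \<open>x x1\<close> could be added to the maximum matching \<open>m2\<close>\<close>
    then have "matched m3 = {x, x1} \<union> matched m2"
      using matched_rematch[OF m2 xx1(3)] x(2) matchingD(2)[OF m2] unfolding m3_def matched_def
      by blast
    then have "card (matched m3) = card (matched m2) + 2"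
      using x(2) xx1(3) \<open>x1 \<notin> matched m2\<close> finite_matched[OF sg m2] by simp
    then show False
      using max2 m3 unfolding maximum_matching_def by fastforce
  qed
  then obtain y where "m2 x1 y"
    unfolding matched_def by blast
  have y: "y \<in> matched m2" "y \<noteq> x" "y \<noteq> x1"
    using \<open>m2 x1 y\<close> x(2) matchingD(1,2)[OF m2] simple_graphD(5)[OF sg] unfolding matched_def by blast+
  have "{a. m2 a x \<or> m2 a x1} = {y}"
    using \<open>m2 x1 y\<close> x(2) matchingD(2,3)[OF m2] unfolding matched_def by blast
  then have M3: "matched m3 = insert x (matched m2 - {y})"
    using matched_rematch[OF m2 xx1(3)] \<open>x1 \<in> matched m2\<close> y(3) unfolding m3_def by blast
  moreover have "card (matched m2) > 0"
    using y(1) finite_matched[OF sg m2] card_gt_0_iff by blast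
  ultimately have "card (matched m3) = card (matched m2)"
    using y(1,2) x(2) finite_matched[OF sg m2] by (simp add: card.insert_remove)
  then have "maximum_matching E m3"
    using maximum_matchingI[OF m3 max2] by simp
  moreover have "{(a, b). m1 a b \<noteq> m3 a b} \<subset> {(a, b). m1 a b \<noteq> m2 a b}"
  proof -
    have "m1 a b = m3 a b" if "a \<in> {x, x1} \<or> b \<in> {x, x1}" for a b
      using that \<open>m1 x x1\<close> matchingD(2,3)[OF m1] unfolding m3_def rematch_def by blast
    moreover have "m3 a b = m2 a b" if "a \<notin> {x, x1}" "b \<notin> {x, x1}" for a b
      using that unfolding m3_def rematch_def by blast
    moreover have "m1 x x1 \<noteq> m2 x x1"
      using \<open>m1 x x1\<close> x(2) unfolding matched_def by blast
    ultimately show ?thesis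
      by blast
  qed
  ultimately show thesis
    using that y(1,2) M3 by blast
qed

lemma maximum_matching_complements_connected:
  assumes sg: "simple_graph V E"
  shows "graph_connected {V - matched m | m. maximum_matching E m} skew_TE_adj"
proof -
  let ?T = "{V - matched m | m. maximum_matching E m}"
  let ?R = "\<lambda>S1 S2. S1 \<in> ?T \<and> S2 \<in> ?T \<and> skew_TE_adj S1 S2"
  have "?R\<^sup>*\<^sup>* (V - matched m1) (V - matched m2)"
    if max1: "maximum_matching E m1" and max2: "maximum_matching E m2" for m1 m2
    using max2
  proof (induction "card {(a, b). m1 a b \<noteq> m2 a b}" arbitrary: m2 rule: less_induct)
    case less
    have m1: "matching E m1" and m2: "matching E m2"
      using max1 less.prems unfolding maximum_matching_def by blast+
    show ?case
    proof (cases "matched m1 \<subseteq> matched m2")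
      case True
      moreover have "card (matched m1) = card (matched m2)"
        using max1 less.prems unfolding maximum_matching_def by (meson le_antisym)
      ultimately have "matched m1 = matched m2"
        using card_seteq[OF finite_matched[OF sg m2]] by simp
      then show ?thesis
        by simp
    next
      case False
      then obtain x where x: "x \<in> matched m1" "x \<notin> matched m2"
        by blast
      obtain m3 y where max3: "maximum_matching E m3" and y: "y \<in> matched m2" "y \<noteq> x"
        and M3: "matched m3 = insert x (matched m2 - {y})"
        and closer: "{(a, b). m1 a b \<noteq> m3 a b} \<subset> {(a, b). m1 a b \<noteq> m2 a b}"
        using maximum_matching_exchange[OF sg max1 less.prems x] by blast
      have "{(a, b). m1 a b \<noteq> m2 a b} \<subseteq> V \<times> V"
        using matchingD(1)[OF m1] matchingD(1)[OF m2] simple_graphD(2,3)[OF sg] by blast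
      then have "finite {(a, b). m1 a b \<noteq> m2 a b}"
        using simple_graphD(1)[OF sg] finite_subset by blast
      then have "?R\<^sup>*\<^sup>* (V - matched m1) (V - matched m3)"
        using less.hyps[OF _ max3] psubset_card_mono[OF _ closer] by blast
      moreover have "x \<in> V" "y \<in> V"
        using x(1) y(1) matched_subset[OF sg m1] matched_subset[OF sg m2] by blast+
      then have "skew_TE_adj (V - matched m3) (V - matched m2)"
        unfolding skew_TE_adj_def M3 using x(2) y by blast
      ultimately show ?thesis
        using max3 less.prems by (blast intro: rtranclp.rtrancl_into_rtrancl)
    qed
  qed
  moreover obtain m where "maximum_matching E m"
    using maximum_matching_exists[OF sg] .
  ultimately show ?thesis
    unfolding graph_connected_def by blast
qed

theorem theorem5p26:
  fixes V :: "'a set" and E :: "'a \<Rightarrow> 'a \<Rightarrow> bool"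
  assumes "is_tree V E"
  shows "graph_connected (skew_TE_vertices V E) skew_TE_adj"
proof -
  have sg: "simple_graph V E" and acyclic: "\<nexists>cs. is_cycle V E cs"
    using assms unfolding is_tree_def by blast+
  have "skew_TE_vertices V E = {V - matched m | m. maximum_matching E m}"
    unfolding skew_TE_vertices_def using min_skew_forcing_set_iff[OF sg acyclic] by blast
  then show ?thesis
    using maximum_matching_complements_connected[OF sg] by simp
qed

end
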